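(* Let $n\ge2$ and let $\beta\in D_n$ have restricted sequence $(b_n,\ldots,b_1)$. Let $1\le j\le 2n-1$ with $j\notin\{b_n-1,b_n,b_n+1\}$, and let $(b'_{n-1},\ldots,b'_1)$ be the restricted sequence of $\tau_j(\beta)\in D_{n-1}$. Then: (1) if $j<b_n-1$, then $b'_{n-1}=b_n-2$; (2) if $j>b_n+1$, then $b'_{n-1}\le b_n$.
   Context: $D_n$ is the set of non-crossing perfect matchings of $\{1,\ldots,2n\}$ (non-crossing $n$-chord diagrams), $D_0=\{\phi\}$. For $1\le k\le 2n+1$, $l_k:D_n\to D_{n+1}$: $l_k(\alpha)$ matches $k$ with $k+1$, old point $i$ becomes $i$ if $i<k$ and $i+2$ if $i\ge k$. For $1\le j\le 2n-1$, $\tau_j:D_n\to D_{n-1}$: if $j$ is matched with $j+1$, delete this pair; otherwise, if $p$ is the partner of $j$ and $p'$ the partner of $j+1$, delete the pairs $\{j,p\},\{j+1,p'\}$ and add the pair $\{p,p'\}$; then renumber the remaining $2n-2$ points order-preservingly to $\{1,\ldots,2n-2\}$. Restricted sequence of $\alpha\in D_n$: let $k_n$ be the smallest $k$ with $k$ matched to $k+1$; the sequence is $(k_n,k_{n-1},\ldots,k_1)$ where $(k_{n-1},\ldots,k_1)$ is the restricted sequence of $\alpha$ with that arc removed (empty for $\phi$). *)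

theory Defs
  imports Main
begin

text \<open>A chord diagram on points 1..2n is represented as a set of arcs (a,b) with a < b.\<close>

type_synonym chord_diagram = "(nat \<times> nat) set"

definition is_perfect_matching :: "nat \<Rightarrow> chord_diagram \<Rightarrow> bool" where
  "is_perfect_matching n M \<longleftrightarrow>
     (\<forall>(a,b)\<in>M. 1 \<le> a \<and> a < b \<and> b \<le> 2*n) \<and>
     (\<forall>i\<in>{1..2*n}. \<exists>!p. p \<in> M \<and> (fst p = i \<or> snd p = i))"

definition noncrossing :: "chord_diagram \<Rightarrow> bool" where
  "noncrossing M \<longleftrightarrow> (\<forall>(a,b)\<in>M. \<forall>(c,d)\<in>M. \<not> (a < c \<and> c < b \<and> b < d))"

definition D :: "nat \<Rightarrow> chord_diagram set" where
  "D n = {M. is_perfect_matching n M \<and> noncrossing M}"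

definition partner :: "chord_diagram \<Rightarrow> nat \<Rightarrow> nat" where
  "partner M i = (THE p. (i,p) \<in> M \<or> (p,i) \<in> M)"

definition renum :: "nat \<Rightarrow> nat \<Rightarrow> nat" where
  "renum j i = (if i < j then i else i - 2)"

definition tau :: "nat \<Rightarrow> chord_diagram \<Rightarrow> chord_diagram" where
  "tau j M =
     (let p = partner M j; p' = partner M (j+1);
          M' = {(a,b) \<in> M. a \<notin> {j, j+1} \<and> b \<notin> {j, j+1}}
               \<union> (if (j, j+1) \<in> M then {} else {(min p p', max p p')})
      in (\<lambda>(a,b). (renum j a, renum j b)) ` M')"

text \<open>Restricted sequence (k_n, ..., k_1) of a diagram in D_n. Removing the arc (k, k+1)
  and renumbering is exactly tau k.\<close>
fun rseq :: "nat \<Rightarrow> chord_diagram \<Rightarrow> nat list" where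
  "rseq 0 M = []"
| "rseq (Suc n) M = (let k = (LEAST k. (k, k+1) \<in> M) in k # rseq n (tau k M))"

end

theory Submission
  imports Defs
begin

text \<open>Let \<open>b\<close> be the first point matched to its successor. Every arc of \<open>\<beta>\<close> encloses a short arc
  \<open>(k, k+1)\<close>, so every arc ends at \<open>b + 1\<close> or later. If \<open>j + 1 < b\<close>, then \<open>j\<close> and \<open>j + 1\<close> are
  left endpoints whose partners lie beyond \<open>b\<close>; hence all arcs of \<open>\<tau>\<^sub>j \<beta>\<close> end at \<open>b - 1\<close> or later,
  and the arc \<open>(b, b+1)\<close> is shifted to \<open>(b - 2, b - 1)\<close>. If \<open>b + 1 < j\<close>, the arc \<open>(b, b+1)\<close>
  survives \<open>\<tau>\<^sub>j\<close> unchanged.\<close>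

definition first_short_arc :: "chord_diagram \<Rightarrow> nat" where
  "first_short_arc M = (LEAST k. (k, k+1) \<in> M)"

lemma hd_rseq: "n \<ge> 1 \<Longrightarrow> hd (rseq n M) = first_short_arc M"
  by (cases n) (simp_all add: Let_def first_short_arc_def)

lemma D_arc_bounds:
  assumes "M \<in> D n" "(a, c) \<in> M"
  shows "1 \<le> a" "a < c" "c \<le> 2*n"
  using assms unfolding D_def is_perfect_matching_def by fastforce+

lemma D_arc_unique:
  assumes "M \<in> D n" "i \<in> {1..2*n}" "P \<in> M" "Q \<in> M"
    "fst P = i \<or> snd P = i" "fst Q = i \<or> snd Q = i"
  shows "P = Q"
  using assms unfolding D_def is_perfect_matching_def by blast

lemma D_point_matched:
  assumes "M \<in> D n" "i \<in> {1..2*n}"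
  obtains p where "(i, p) \<in> M \<or> (p, i) \<in> M"
proof -
  from assms obtain P where "P \<in> M" "fst P = i \<or> snd P = i"
    unfolding D_def is_perfect_matching_def by blast
  with that show thesis by (cases P) auto
qed

lemma D_noncrossing:
  assumes "M \<in> D n" "(a, b) \<in> M" "(c, d) \<in> M"
  shows "\<not> (a < c \<and> c < b \<and> b < d)"
  using assms unfolding D_def noncrossing_def by blast

lemma D_partner_eq:
  assumes "M \<in> D n" "(i, p) \<in> M"
  shows "partner M i = p"
  unfolding partner_def
proof (rule the_equality)
  have i: "i \<in> {1..2*n}"
    using D_arc_bounds[OF assms] by simp
  fix q assume "(i, q) \<in> M \<or> (q, i) \<in> M"
  then show "q = p"
  proof
    assume "(i, q) \<in> M"
    then show "q = p" using D_arc_unique[OF assms(1) i _ assms(2)] by fastforce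
  next
    assume "(q, i) \<in> M"
    then have "(q, i) = (i, p)" using D_arc_unique[OF assms(1) i _ assms(2)] by simp
    then show "q = p" using D_arc_bounds(2)[OF assms] by simp
  qed
qed (use assms in simp)

text \<open>The point \<open>a + 1\<close> is either matched inside the arc, giving a shorter arc, or (by
  noncrossing) matched to \<open>a\<close> itself.\<close>
lemma D_arc_encloses_short_arc:
  assumes "M \<in> D n" "(a, c) \<in> M"
  shows "\<exists>k. a \<le> k \<and> k + 1 \<le> c \<and> (k, k+1) \<in> M"
  using assms(2)
proof (induction "c - a" arbitrary: a c rule: less_induct)
  case less
  note ac = D_arc_bounds[OF assms(1) less.prems]
  show ?case
  proof (cases "c = a + 1")
    case True
    with less.prems show ?thesis by auto
  next
    case False
    with ac have lt: "a + 1 < c" by simp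
    with ac obtain q where q: "(a+1, q) \<in> M \<or> (q, a+1) \<in> M"
      using D_point_matched[OF assms(1), of "a+1"] by auto
    have "q < c" if "(a+1, q) \<in> M"
    proof -
      have "q \<noteq> c"
        using D_arc_unique[OF assms(1) _ that less.prems, of c] ac lt by auto
      moreover have "\<not> c < q"
        using D_noncrossing[OF assms(1) less.prems that] lt by simp
      ultimately show ?thesis by simp
    qed
    moreover have "q = a" if "(q, a+1) \<in> M"
    proof -
      have "q \<le> a" using D_arc_bounds(2)[OF assms(1) that] by simp
      moreover have "\<not> q < a"
        using D_noncrossing[OF assms(1) that less.prems] lt by simp
      ultimately show ?thesis by simp
    qed
    ultimately consider "(a+1, q) \<in> M" "q < c" | "(q, a+1) \<in> M" "q = a"
      using q by blast
    then show ?thesis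
    proof cases
      case 1
      have "q - (a+1) < c - a" using 1 D_arc_bounds(2)[OF assms(1) 1(1)] by simp
      with less.hyps 1 obtain k where "a + 1 \<le> k" "k + 1 \<le> q" "(k, k+1) \<in> M"
        by blast
      with 1 show ?thesis by (intro exI[of _ k]) simp
    next
      case 2
      with lt show ?thesis by auto
    qed
  qed
qed

lemma first_short_arc_mem:
  assumes "M \<in> D n" "n \<ge> 1"
  shows "(first_short_arc M, first_short_arc M + 1) \<in> M"
proof -
  from assms obtain p where "(1, p) \<in> M \<or> (p, 1) \<in> M"
    using D_point_matched[of M n 1] by auto
  then have "\<exists>k. (k, k+1) \<in> M"
    using D_arc_encloses_short_arc[OF assms(1)] by blast
  then show ?thesis
    unfolding first_short_arc_def by (rule LeastI_ex)
qed

lemma first_short_arc_le_right_end: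
  assumes "M \<in> D n" "(a, c) \<in> M"
  shows "first_short_arc M + 1 \<le> c"
proof -
  obtain k where "k + 1 \<le> c" "(k, k+1) \<in> M"
    using D_arc_encloses_short_arc[OF assms] by blast
  moreover have "first_short_arc M \<le> k"
    unfolding first_short_arc_def using \<open>(k, k+1) \<in> M\<close> by (rule Least_le)
  ultimately show ?thesis by simp
qed

lemma D_partner_beyond_first_short_arc:
  assumes "M \<in> D n" "i \<in> {1..2*n}" "i \<le> first_short_arc M"
  shows "first_short_arc M + 1 \<le> partner M i"
proof -
  obtain p where "(i, p) \<in> M \<or> (p, i) \<in> M"
    using D_point_matched[OF assms(1,2)] .
  moreover have "(p, i) \<notin> M"
    using first_short_arc_le_right_end[OF assms(1)] assms(3) by fastforce
  ultimately have "(i, p) \<in> M" by simp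
  then show ?thesis
    using D_partner_eq[OF assms(1)] first_short_arc_le_right_end[OF assms(1)] by auto
qed

lemma tau_keeps_arc:
  assumes "(a, c) \<in> M" "a \<notin> {j, j+1}" "c \<notin> {j, j+1}"
  shows "(renum j a, renum j c) \<in> tau j M"
  unfolding tau_def Let_def by (rule image_eqI[where x = "(a, c)"]) (use assms in auto)

lemma tau_arc_cases:
  assumes "(x, y) \<in> tau j M"
  obtains a c where "(a, c) \<in> M" "y = renum j c"
    | "y = renum j (max (partner M j) (partner M (j+1)))"
proof -
  from assms obtain a c where "(x, y) = (renum j a, renum j c)"
    "(a, c) \<in> M \<or> c = max (partner M j) (partner M (j+1))"
    unfolding tau_def Let_def by (auto split: if_splits)
  with that show thesis by blast
qed

lemma first_short_arc_tau_left:
  assumes "M \<in> D n" "n \<ge> 1" "1 \<le> j" "j + 1 < first_short_arc M"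
  shows "first_short_arc (tau j M) = first_short_arc M - 2"
proof -
  define b where "b = first_short_arc M"
  have short: "(b, b+1) \<in> M"
    unfolding b_def using first_short_arc_mem[OF assms(1,2)] .
  have right_end: "b - 1 \<le> y" if "(x, y) \<in> tau j M" for x y
    using that
  proof (cases rule: tau_arc_cases)
    case (1 a c)
    with assms(4) show ?thesis
      using first_short_arc_le_right_end[OF assms(1) 1(1)] unfolding b_def renum_def by simp
  next
    case 2
    have "j \<in> {1..2*n}"
      using assms(3,4) D_arc_bounds(3)[OF assms(1) short] unfolding b_def by simp
    then have "b + 1 \<le> partner M j"
      using D_partner_beyond_first_short_arc[OF assms(1)] assms(4) unfolding b_def by simp
    with 2 assms(4) show ?thesis unfolding b_def renum_def by auto
  qed
  have "(b - 2, b - 1) \<in> tau j M"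
    using tau_keeps_arc[OF short, of j] assms(4) unfolding b_def renum_def by auto
  moreover have "b - 2 + 1 = b - 1"
    using assms(4) unfolding b_def by simp
  ultimately have "(b - 2, b - 2 + 1) \<in> tau j M" by metis
  moreover have "b - 2 \<le> k" if "(k, k+1) \<in> tau j M" for k
    using right_end[OF that] by simp
  ultimately show ?thesis
    unfolding first_short_arc_def[of "tau j M"] b_def[symmetric] by (rule Least_equality)
qed

lemma first_short_arc_tau_right:
  assumes "M \<in> D n" "n \<ge> 1" "first_short_arc M + 1 < j"
  shows "first_short_arc (tau j M) \<le> first_short_arc M"
proof -
  have "(first_short_arc M, first_short_arc M + 1) \<in> tau j M"
    using tau_keeps_arc[OF first_short_arc_mem[OF assms(1,2)], of j] assms(3)
    unfolding renum_def by auto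
  then show ?thesis
    unfolding first_short_arc_def[of "tau j M"] by (rule Least_le)
qed

theorem mainTheorem4:
  fixes n j :: nat and \<beta> :: chord_diagram
  assumes "n \<ge> 2" and "\<beta> \<in> D n"
    and "1 \<le> j" and "j \<le> 2*n - 1"
    and "j \<notin> {hd (rseq n \<beta>) - 1, hd (rseq n \<beta>), hd (rseq n \<beta>) + 1}"
  shows "(j < hd (rseq n \<beta>) - 1 \<longrightarrow> hd (rseq (n-1) (tau j \<beta>)) = hd (rseq n \<beta>) - 2)
       \<and> (j > hd (rseq n \<beta>) + 1 \<longrightarrow> hd (rseq (n-1) (tau j \<beta>)) \<le> hd (rseq n \<beta>))"
proof -
  have n: "n \<ge> 1" using assms(1) by simp
  have hd_eqs: "hd (rseq n \<beta>) = first_short_arc \<beta>"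
    "hd (rseq (n-1) (tau j \<beta>)) = first_short_arc (tau j \<beta>)"
    using assms(1) hd_rseq by auto
  show ?thesis
    unfolding hd_eqs
  proof (intro conjI impI)
    assume "j < first_short_arc \<beta> - 1"
    then show "first_short_arc (tau j \<beta>) = first_short_arc \<beta> - 2"
      using first_short_arc_tau_left[OF assms(2) n assms(3)] by simp
  next
    assume "first_short_arc \<beta> + 1 < j"
    then show "first_short_arc (tau j \<beta>) \<le> first_short_arc \<beta>"
      by (rule first_short_arc_tau_right[OF assms(2) n])
  qed
qed

end
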